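(* There is a constant $C$ such that for every sufficiently large $n$ there exists a $2$-planar graph of girth $5$ on $n$ vertices with at least $\left(2+\frac{2}{7}\right)n-C$ edges.
   Context: All graphs are finite and simple. A graph is $k$-planar if it admits a drawing in the plane in which every edge is crossed at most $k$ times. The girth of a graph is the length of its shortest cycle. (The paper states the edge count as $(2+\frac27)n-O(1)$.) *)

theory Defs
  imports "HOL-Analysis.Analysis"
begin

definition simple_graph :: "'a set \<Rightarrow> 'a set set \<Rightarrow> bool" where
  "simple_graph V E \<longleftrightarrow> finite V \<and> (\<forall>e\<in>E. e \<subseteq> V \<and> card e = 2)"

definition has_cycle_of_length :: "'a set \<Rightarrow> 'a set set \<Rightarrow> nat \<Rightarrow> bool" where
  "has_cycle_of_length V E k \<longleftrightarrow> 3 \<le> k \<and>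
     (\<exists>xs. length xs = k \<and> distinct xs \<and> set xs \<subseteq> V \<and>
        (\<forall>i<k. {xs ! i, xs ! ((i + 1) mod k)} \<in> E))"

definition girth :: "'a set \<Rightarrow> 'a set set \<Rightarrow> enat" where
  "girth V E = (if \<exists>k. has_cycle_of_length V E k
                then enat (LEAST k. has_cycle_of_length V E k) else \<infinity>)"

definition curve_interior :: "(real \<Rightarrow> complex) \<Rightarrow> complex set" where
  "curve_interior g = g ` {0<..<1}"

text \<open>Every common interior point of two distinct edges is a crossing.\<close>
definition drawing :: "'a set \<Rightarrow> 'a set set \<Rightarrow> ('a \<Rightarrow> complex) \<Rightarrow> ('a set \<Rightarrow> real \<Rightarrow> complex) \<Rightarrow> bool" where
  "drawing V E pos curve \<longleftrightarrow> inj_on pos V \<and>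
     (\<forall>e\<in>E. arc (curve e) \<and> {pathstart (curve e), pathfinish (curve e)} = pos ` e \<and>
             pos ` V \<inter> curve_interior (curve e) = {}) \<and>
     (\<forall>e\<in>E. \<forall>f\<in>E. e \<noteq> f \<longrightarrow> finite (curve_interior (curve e) \<inter> curve_interior (curve f)))"

definition crossings_on_edge :: "'a set set \<Rightarrow> ('a set \<Rightarrow> real \<Rightarrow> complex) \<Rightarrow> 'a set \<Rightarrow> nat" where
  "crossings_on_edge E curve e =
     (\<Sum>f\<in>E - {e}. card (curve_interior (curve e) \<inter> curve_interior (curve f)))"

definition k_planar :: "nat \<Rightarrow> 'a set \<Rightarrow> 'a set set \<Rightarrow> bool" where
  "k_planar k V E \<longleftrightarrow> (\<exists>pos curve. drawing V E pos curve \<and>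
     (\<forall>e\<in>E. crossings_on_edge E curve e \<le> k))"

end

(* The graphs live on a cylinder of circumference 5: the vertices are the grid points (x, y) with
   x >= 0 and y read modulo 5, and (X, Y) |-> exp (X + 2 pi i Y / 5) embeds the cylinder in the
   plane, turning straight segments into arcs.  Column x starts edges in the directions
   pattern x, a pattern of period 7 with 3 + 3 + 3 + 1 + 2 + 2 + 2 = 16 directions, so every
   7 columns carry 5 * 16 = 80 edges on 35 vertices, i.e. 16/7 = 2 + 2/7 edges per vertex.
   Planarity and girth are then local, periodic questions.  An edge can only be crossed by edges
   starting in an adjacent column and row, and whether two lifted segments meet is decided by an
   integer Cramer-rule test; a finite table over one period shows that every edge is crossed at
   most twice, each time in a single point.  Likewise a finite search from one period of start
   vertices excludes cycles of length 3 and 4, and an explicit 5-cycle gives girth exactly 5. *)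

theory Submission
  imports Defs
begin

section \<open>The cylinder drawn in the plane\<close>

definition cylinder_point :: "real \<Rightarrow> real \<Rightarrow> complex" where
  "cylinder_point X Y = exp (Complex X (2 * pi * Y / 5))"

lemma cylinder_point_eq_iff:
  "cylinder_point X Y = cylinder_point X' Y' \<longleftrightarrow> X = X' \<and> (\<exists>j::int. Y = Y' + 5 * of_int j)"
proof
  assume "cylinder_point X Y = cylinder_point X' Y'"
  then obtain n :: int
    where "Complex X (2 * pi * Y / 5) = Complex X' (2 * pi * Y' / 5) + of_int (2 * n) * pi * \<i>"
    by (auto simp: cylinder_point_def exp_eq)
  then have "X = X'" and "pi * Y = pi * (Y' + 5 * n)"
    by (auto simp: complex_eq_iff field_simps)
  then show "X = X' \<and> (\<exists>j::int. Y = Y' + 5 * of_int j)"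
    by auto
next
  assume "X = X' \<and> (\<exists>j::int. Y = Y' + 5 * of_int j)"
  then obtain j :: int where "X = X'" "Y = Y' + 5 * of_int j"
    by blast
  then have "Complex X (2 * pi * Y / 5) = Complex X' (2 * pi * Y' / 5) + of_int (2 * j) * pi * \<i>"
    by (simp add: complex_eq_iff field_simps)
  then show "cylinder_point X Y = cylinder_point X' Y'"
    by (auto simp: cylinder_point_def exp_eq)
qed

fun code_curve :: "int \<times> int \<times> (int \<times> int) \<Rightarrow> real \<Rightarrow> complex" where
  "code_curve (x, y, d) =
     (\<lambda>s. cylinder_point (of_int x + s * of_int (fst d)) (of_int y + s * of_int (snd d)))"

lemma path_code_curve: "path (code_curve t)"
  by (cases t) (auto simp: path_def cylinder_point_def Complex_eq intro!: continuous_intros)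

lemma arc_code_curve:
  assumes "d \<noteq> (0, 0)" and "\<bar>snd d\<bar> < 5"
  shows "arc (code_curve (x, y, d))"
  unfolding arc_def
proof (intro conjI path_code_curve inj_onI)
  fix s s' assume s: "s \<in> {0..1}" "s' \<in> {0..1}"
    and "code_curve (x, y, d) s = code_curve (x, y, d) s'"
  then obtain j :: int where hX: "(s - s') * fst d = 0" and hY: "(s - s') * snd d = 5 * j"
    by (auto simp: cylinder_point_eq_iff algebra_simps)
  show "s = s'"
  proof (cases "fst d = 0")
    case True
    with assms(1) have "snd d \<noteq> 0"
      by (cases d) auto
    have "\<bar>(s - s') * snd d\<bar> \<le> 1 * \<bar>of_int (snd d)\<bar>"
      unfolding abs_mult using s by (intro mult_right_mono) auto
    also have "\<dots> < 5"
      using assms(2) by linarith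
    finally have "j = 0"
      using hY by simp
    with hY \<open>snd d \<noteq> 0\<close> show ?thesis
      by simp
  qed (use hX in simp)
qed

lemma code_curve_interior_iff:
  "z \<in> curve_interior (code_curve (x, y, d)) \<longleftrightarrow>
     (\<exists>s. 0 < s \<and> s < 1 \<and>
        z = cylinder_point (of_int x + s * of_int (fst d)) (of_int y + s * of_int (snd d)))"
  by (auto simp: curve_interior_def)

definition vertex_point :: "nat \<Rightarrow> complex" where
  "vertex_point v = cylinder_point (real (v div 5)) (real (v mod 5))"

lemma inj_vertex_point: "inj vertex_point"
proof (rule injI)
  fix u v assume "vertex_point u = vertex_point v"
  then obtain j :: int where "u div 5 = v div 5" and j: "real (u mod 5) = v mod 5 + 5 * j"
    by (auto simp: vertex_point_def cylinder_point_eq_iff)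
  moreover have "real (u mod 5) < 5" "real (v mod 5) < 5"
    by simp_all
  with j have "j = 0"
    by linarith
  with j have "u mod 5 = v mod 5"
    by simp
  ultimately show "u = v"
    by (metis div_mult_mod_eq)
qed

lemma vertex_point_notin_code_curve_interior:
  assumes "fst d = 1 \<or> \<bar>snd d\<bar> = 1"
  shows "vertex_point v \<notin> curve_interior (code_curve (x, y, d))"
proof
  assume "vertex_point v \<in> curve_interior (code_curve (x, y, d))"
  then obtain s where s: "0 < s" "s < 1"
    and "cylinder_point (real (v div 5)) (real (v mod 5)) =
         cylinder_point (of_int x + s * of_int (fst d)) (of_int y + s * of_int (snd d))"
    unfolding code_curve_interior_iff vertex_point_def by blast
  then obtain j :: int where hX: "s * of_int (fst d) = of_int (int (v div 5) - x)"
    and hY: "s * of_int (snd d) = of_int (int (v mod 5) - y - 5 * j)"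
    unfolding cylinder_point_eq_iff by (auto simp: algebra_simps)
  obtain m :: int where "s = \<bar>of_int m\<bar>"
  proof (cases "fst d = 1")
    case True
    with hX show thesis
      using s that[of "int (v div 5) - x"] by simp
  next
    case False
    with assms have "\<bar>of_int (snd d) :: real\<bar> = 1"
      by simp
    then have "s = \<bar>s * of_int (snd d)\<bar>"
      using s by (simp add: abs_mult)
    then show thesis
      unfolding hY by (rule that)
  qed
  with s have "0 < \<bar>m\<bar>" and "\<bar>m\<bar> < 1"
    by (simp_all flip: of_int_abs)
  then show False
    by simp
qed

section \<open>Meeting of lattice segments\<close>

definition det2 :: "int \<times> int \<Rightarrow> int \<times> int \<Rightarrow> int" where
  "det2 u v = fst u * snd v - snd u * fst v"

definition open_segments_meet :: "int \<times> int \<Rightarrow> int \<times> int \<Rightarrow> int \<times> int \<Rightarrow> bool" where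
  "open_segments_meet d w e \<longleftrightarrow> (\<exists>t s :: real. 0 < t \<and> t < 1 \<and> 0 < s \<and> s < 1 \<and>
     of_int (fst w) = t * of_int (fst d) - s * of_int (fst e) \<and>
     of_int (snd w) = t * of_int (snd d) - s * of_int (snd e))"

lemma det2_cramer:
  assumes "of_int (fst w) = t * of_int (fst d) - s * of_int (fst e)"
    and "of_int (snd w) = t * of_int (snd d) - s * of_int (snd e)"
  shows "(of_int (det2 w e) :: real) = t * of_int (det2 d e)"
    and "(of_int (det2 w d) :: real) = s * of_int (det2 d e)"
  by (simp_all add: det2_def assms algebra_simps)

lemma int_ratio_in_unit_interval:
  fixes a D :: int and t :: real
  assumes "of_int a = t * of_int D" and "0 < t" "t < 1" "D \<noteq> 0"
  shows "0 < a * D \<and> \<bar>a\<bar> < \<bar>D\<bar>"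
proof
  have "0 < t * (of_int D)\<^sup>2"
    using assms(2,4) by simp
  also have "\<dots> = of_int (a * D)"
    by (simp add: assms(1) power2_eq_square mult.assoc)
  finally show "0 < a * D"
    by (simp only: of_int_0_less_iff)
  have "of_int \<bar>a\<bar> = t * of_int \<bar>D\<bar>"
    using assms(1,2) by (simp add: abs_mult)
  also have "\<dots> < 1 * of_int \<bar>D\<bar>"
    using assms(3,4) by (intro mult_strict_right_mono) auto
  finally show "\<bar>a\<bar> < \<bar>D\<bar>"
    by (simp only: mult_1 of_int_less_iff)
qed

text \<open>A decidable necessary condition for the open segments to meet: for non-parallel
  directions the intersection parameters are Cramer quotients, which must lie in (0,1);
  for equal directions the segments must be collinear and overlap.\<close>
definition meet_test :: "int \<times> int \<Rightarrow> int \<times> int \<Rightarrow> int \<times> int \<Rightarrow> bool" where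
  "meet_test d w e =
     (if det2 d e \<noteq> 0 then
        0 < det2 w e * det2 d e \<and> \<bar>det2 w e\<bar> < \<bar>det2 d e\<bar> \<and>
        0 < det2 w d * det2 d e \<and> \<bar>det2 w d\<bar> < \<bar>det2 d e\<bar>
      else e = d \<longrightarrow>
        det2 w d = 0 \<and> \<bar>fst w * fst d + snd w * snd d\<bar> < fst d * fst d + snd d * snd d)"

lemma open_segments_meet_imp_meet_test:
  assumes "open_segments_meet d w e" and "d \<noteq> (0, 0)"
  shows "meet_test d w e"
proof -
  obtain t s :: real where ts: "0 < t" "t < 1" "0 < s" "s < 1"
    and w: "of_int (fst w) = t * of_int (fst d) - s * of_int (fst e)"
           "of_int (snd w) = t * of_int (snd d) - s * of_int (snd e)"
    using assms(1) unfolding open_segments_meet_def by blast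
  show ?thesis
  proof (cases "det2 d e = 0")
    case False
    then show ?thesis
      using int_ratio_in_unit_interval[OF det2_cramer(1)[OF w] ts(1,2)]
        int_ratio_in_unit_interval[OF det2_cramer(2)[OF w] ts(3,4)]
      by (simp add: meet_test_def)
  next
    case True
    have "det2 w d = 0 \<and> \<bar>fst w * fst d + snd w * snd d\<bar> < fst d * fst d + snd d * snd d"
      if "e = d"
    proof
      define N where "N = fst d * fst d + snd d * snd d"
      have "0 < N"
        using assms(2) unfolding N_def by (cases d) (simp add: sum_squares_gt_zero_iff)
      have w': "of_int (fst w) = (t - s) * of_int (fst d)" "of_int (snd w) = (t - s) * of_int (snd d)"
        using w that by (simp_all add: algebra_simps)
      have "(of_int (det2 w d) :: real) = 0"
        by (simp add: det2_def w' algebra_simps)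
      then show "det2 w d = 0"
        by simp
      have "of_int (fst w * fst d + snd w * snd d) = (t - s) * of_int N"
        by (simp add: N_def w' algebra_simps)
      then have "of_int \<bar>fst w * fst d + snd w * snd d\<bar> = \<bar>t - s\<bar> * of_int N"
        using \<open>0 < N\<close> by (simp add: abs_mult)
      also have "\<dots> < 1 * of_int N"
        using ts \<open>0 < N\<close> by (intro mult_strict_right_mono) auto
      finally show "\<bar>fst w * fst d + snd w * snd d\<bar> < N"
        by (simp only: mult_1 of_int_less_iff)
    qed
    with True show ?thesis
      by (simp add: meet_test_def)
  qed
qed

lemma open_segments_meet_offset:
  assumes "open_segments_meet d w e"
    and "0 \<le> fst d" "fst d \<le> 2" "\<bar>snd d\<bar> \<le> 1" and "0 \<le> fst e" "fst e \<le> 2" "\<bar>snd e\<bar> \<le> 1"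
  shows "fst w \<in> {-1, 0, 1} \<and> snd w \<in> {-1, 0, 1}"
proof -
  obtain t s :: real where ts: "0 < t" "t < 1" "0 < s" "s < 1"
    and w: "of_int (fst w) = t * of_int (fst d) - s * of_int (fst e)"
           "of_int (snd w) = t * of_int (snd d) - s * of_int (snd e)"
    using assms(1) unfolding open_segments_meet_def by blast
  have bound: "0 \<le> r * of_int a \<and> r * of_int a < 2" "\<bar>r * of_int b\<bar> < 1"
    if "0 < r" "r < 1" "0 \<le> a" "a \<le> 2" "\<bar>b\<bar> \<le> 1" for r :: real and a b :: int
  proof -
    have "r * of_int a \<le> r * 2"
      using that by (intro mult_left_mono) auto
    moreover have "0 \<le> r * of_int a"
      using that by simp
    ultimately show "0 \<le> r * of_int a \<and> r * of_int a < 2"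
      using that by linarith
    have "\<bar>r * of_int b\<bar> \<le> r * 1"
      unfolding abs_mult abs_of_pos[OF that(1)] using that by (intro mult_left_mono) auto
    with that show "\<bar>r * of_int b\<bar> < 1"
      by simp
  qed
  have "- 2 < (of_int (fst w) :: real)" "(of_int (fst w) :: real) < 2"
    and "- 2 < (of_int (snd w) :: real)" "(of_int (snd w) :: real) < 2"
    using bound[of t "fst d" "snd d"] bound[of s "fst e" "snd e"] assms(2-7) ts
    unfolding w by linarith+
  then show ?thesis
    by auto
qed

section \<open>The periodic lattice graph\<close>

definition dirs :: "(int \<times> int) list" where
  "dirs = [(0, 1), (1, -1), (2, 1), (1, 0), (2, -1)]"

definition column_patterns :: "(int \<times> int) list list" where
  "column_patterns =
     [[(0, 1), (1, -1), (2, 1)], [(1, -1), (1, 0), (2, 1)], [(1, 0), (2, -1), (2, 1)], [(2, -1)],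
      [(1, -1), (2, 1)], [(1, 0), (2, 1)], [(0, 1), (2, 1)]]"

definition pattern :: "int \<Rightarrow> (int \<times> int) list" where
  "pattern x = column_patterns ! nat (x mod 7)"

lemma pattern_mod_add: "pattern (x mod 7 + a) = pattern (x + a)"
  by (simp add: pattern_def mod_add_left_eq)

lemma pattern_periodic: "pattern (x + 7 * k) = pattern x"
  by (simp add: pattern_def)

lemma set_pattern_subset_dirs: "set (pattern x) \<subseteq> set dirs"
proof -
  have "nat (x mod 7) < length column_patterns"
    by (simp add: column_patterns_def nat_less_iff)
  moreover have "\<forall>p \<in> set column_patterns. set p \<subseteq> set dirs"
    by (simp add: column_patterns_def dirs_def)
  ultimately show ?thesis
    unfolding pattern_def by (meson nth_mem)
qed

lemma pattern_dir:
  assumes "d \<in> set (pattern x)"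
  shows "d \<noteq> (0, 0)" and "0 \<le> fst d" "fst d \<le> 2" "\<bar>snd d\<bar> \<le> 1"
    and "fst d = 1 \<or> \<bar>snd d\<bar> = 1" and "fst d = 0 \<Longrightarrow> snd d = 1"
  using set_pattern_subset_dirs[of x] assms by (auto simp: dirs_def)

text \<open>A code (x, y, d) stands for the edge from the grid point (x, y) to (x, y) + d; rows are
  read modulo 5.\<close>
definition codes :: "(int \<times> int \<times> (int \<times> int)) set" where
  "codes = {(x, y, d). 0 \<le> x \<and> 0 \<le> y \<and> y < 5 \<and> d \<in> set (pattern x)}"

definition vtx :: "int \<Rightarrow> int \<Rightarrow> nat" where
  "vtx x y = nat (5 * x + y mod 5)"

fun code_edge :: "int \<times> int \<times> (int \<times> int) \<Rightarrow> nat set" where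
  "code_edge (x, y, d) = {vtx x y, vtx (x + fst d) (y + snd d)}"

declare code_edge.simps [simp del]

lemma vtx_div_mod:
  assumes "0 \<le> x"
  shows "int (vtx x y div 5) = x" and "int (vtx x y mod 5) = y mod 5"
proof -
  have "int (vtx x y) = 5 * x + y mod 5"
    using assms by (simp add: vtx_def)
  then show "int (vtx x y div 5) = x" and "int (vtx x y mod 5) = y mod 5"
    by (simp_all add: zdiv_int zmod_int)
qed

lemma vertex_point_vtx:
  assumes "0 \<le> x"
  shows "vertex_point (vtx x y) = cylinder_point (of_int x) (of_int y)"
proof -
  note vtx_div_mod[OF assms, of y]
  moreover have "y mod 5 = y + 5 * (- (y div 5))"
    using div_mult_mod_eq[of y 5] by linarith
  then have "(of_int (y mod 5) :: real) = of_int y + 5 * of_int (- (y div 5))"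
    by (metis of_int_add of_int_mult of_int_numeral)
  ultimately show ?thesis
    unfolding vertex_point_def cylinder_point_eq_iff by (metis of_int_of_nat_eq)
qed

lemma vtx_shift: "vtx x (y + 5 * k) = vtx x y"
  by (simp add: vtx_def)

lemma code_edge_shift: "code_edge (x, y + 5 * k, d) = code_edge (x, y, d)"
proof -
  have "y + 5 * k + snd d = (y + snd d) + 5 * k"
    by simp
  then show ?thesis
    by (simp only: code_edge.simps vtx_shift)
qed

section \<open>At most two crossings per edge\<close>

text \<open>The edges (x + a, y + b, e) that may cross the edge (x, y, d); larger offsets are
  excluded by \<open>open_segments_meet_offset\<close>.\<close>
definition crossing_candidates :: "int \<Rightarrow> int \<times> int \<Rightarrow> (int \<times> int \<times> (int \<times> int)) list" where
  "crossing_candidates x d =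
     filter (\<lambda>(a, b, e). (a, b, e) \<noteq> (0, 0, d) \<and> meet_test d (a, b) e)
       (concat (map (\<lambda>a. map (Pair a) (List.product [-1, 0, 1] (pattern (x + a)))) [-1, 0, 1]))"

lemma mem_crossing_candidates:
  "(a, b, e) \<in> set (crossing_candidates x d) \<longleftrightarrow>
     a \<in> set [-1, 0, 1] \<and> b \<in> set [-1, 0, 1] \<and> e \<in> set (pattern (x + a)) \<and>
     (a, b, e) \<noteq> (0, 0, d) \<and> meet_test d (a, b) e"
  unfolding crossing_candidates_def by auto

lemma crossing_candidates_mod: "crossing_candidates (x mod 7) d = crossing_candidates x d"
  by (simp add: crossing_candidates_def pattern_mod_add)

lemma crossing_table:
  assumes "d \<in> set (pattern x)"
  shows "length (crossing_candidates x d) \<le> 2"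
    and "(a, b, e) \<in> set (crossing_candidates x d) \<Longrightarrow> det2 d e \<noteq> 0"
proof -
  have table: "\<forall>c \<in> set [0..6]. \<forall>d \<in> set (pattern c). length (crossing_candidates c d) \<le> 2 \<and>
      (\<forall>(a, b, e) \<in> set (crossing_candidates c d). det2 d e \<noteq> 0)"
    by code_simp
  have "x mod 7 \<in> set [0..6]"
    by simp
  with table assms show "length (crossing_candidates x d) \<le> 2"
    and "(a, b, e) \<in> set (crossing_candidates x d) \<Longrightarrow> det2 d e \<noteq> 0"
    by (fastforce simp: crossing_candidates_mod pattern_mod_add[of x 0, simplified])+
qed

fun crossing_points :: "int \<times> int \<times> (int \<times> int) \<Rightarrow> (nat set \<times> complex) set" where
  "crossing_points (x, y, d) =
     (\<lambda>(a, b, e). (code_edge (x + a, y + b, e),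
                   code_curve (x, y, d) (of_int (det2 (a, b) e) / of_int (det2 d e))))
       ` set (crossing_candidates x d)"

declare crossing_points.simps [simp del]

lemma card_crossing_points_le:
  assumes "(x, y, d) \<in> codes"
  shows "card (crossing_points (x, y, d)) \<le> 2"
proof -
  have "card (crossing_points (x, y, d)) \<le> length (crossing_candidates x d)"
    unfolding crossing_points.simps by (rule order_trans[OF card_image_le[OF finite_set] card_length])
  also have "\<dots> \<le> 2"
    using assms crossing_table(1) by (simp add: codes_def)
  finally show ?thesis .
qed

lemma code_curves_meet_lift:
  assumes "z \<in> curve_interior (code_curve (x, y, d))" "z \<in> curve_interior (code_curve (x', y', e))"
  obtains j t where "0 < t" "t < 1" and "z = code_curve (x, y, d) t"
    and "open_segments_meet d (x' - x, y' + 5 * j - y) e"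
    and "of_int (det2 (x' - x, y' + 5 * j - y) e) = t * of_int (det2 d e)"
proof -
  obtain t where t: "0 < t" "t < 1"
    and zt: "z = cylinder_point (of_int x + t * of_int (fst d)) (of_int y + t * of_int (snd d))"
    using assms(1) unfolding code_curve_interior_iff by blast
  obtain s where s: "0 < s" "s < 1"
    and zs: "z = cylinder_point (of_int x' + s * of_int (fst e)) (of_int y' + s * of_int (snd e))"
    using assms(2) unfolding code_curve_interior_iff by blast
  have "cylinder_point (of_int x + t * of_int (fst d)) (of_int y + t * of_int (snd d)) =
        cylinder_point (of_int x' + s * of_int (fst e)) (of_int y' + s * of_int (snd e))"
    using zt zs by simp
  then obtain j :: int where
    hx: "of_int x + t * of_int (fst d) = of_int x' + s * of_int (fst e)" and
    hy: "of_int y + t * of_int (snd d) = of_int y' + s * of_int (snd e) + 5 * of_int j"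
    unfolding cylinder_point_eq_iff by blast
  define a b where "a = x' - x" and "b = y' + 5 * j - y"
  have wx: "of_int a = t * of_int (fst d) - s * of_int (fst e)"
    using hx by (simp add: a_def)
  have wy: "of_int b = t * of_int (snd d) - s * of_int (snd e)"
    using hy by (simp add: b_def)
  have "z = code_curve (x, y, d) t"
    using zt by simp
  moreover have "open_segments_meet d (a, b) e"
    unfolding open_segments_meet_def using t s wx wy by auto
  moreover have "of_int (det2 (a, b) e) = t * of_int (det2 d e)"
    using det2_cramer(1)[of "(a, b)" t d s e] wx wy by simp
  ultimately show thesis
    using t unfolding a_def b_def by (intro that) simp_all
qed

lemma code_curves_cross:
  assumes codes: "(x, y, d) \<in> codes" "(x', y', e) \<in> codes"
    and ne: "code_edge (x', y', e) \<noteq> code_edge (x, y, d)"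
    and z: "z \<in> curve_interior (code_curve (x, y, d))" "z \<in> curve_interior (code_curve (x', y', e))"
  shows "(code_edge (x', y', e), z) \<in> crossing_points (x, y, d)"
proof -
  have d: "d \<in> set (pattern x)" and e: "e \<in> set (pattern x')"
    using codes by (auto simp: codes_def)
  obtain j t where t: "0 < t" "t < 1" and zt: "z = code_curve (x, y, d) t"
    and meet: "open_segments_meet d (x' - x, y' + 5 * j - y) e"
    and det: "of_int (det2 (x' - x, y' + 5 * j - y) e) = t * of_int (det2 d e)"
    using code_curves_meet_lift[OF z] .
  define a b where "a = x' - x" and "b = y' + 5 * j - y"
  note meet det
  then have meet: "open_segments_meet d (a, b) e"
    and det: "of_int (det2 (a, b) e) = t * of_int (det2 d e)"
    unfolding a_def b_def .
  have ab: "a \<in> {-1, 0, 1}" "b \<in> {-1, 0, 1}"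
    using open_segments_meet_offset[OF meet] pattern_dir[OF d] pattern_dir[OF e] by simp_all
  have same_edge: "code_edge (x + a, y + b, e) = code_edge (x', y', e)"
    using code_edge_shift[of x' y' j e] by (simp add: a_def b_def)
  have "(a, b, e) \<noteq> (0, 0, d)"
  proof
    assume "(a, b, e) = (0, 0, d)"
    then have "code_edge (x + a, y + b, e) = code_edge (x, y, d)"
      by simp
    with same_edge ne show False
      by metis
  qed
  moreover have "meet_test d (a, b) e"
    using open_segments_meet_imp_meet_test[OF meet pattern_dir(1)[OF d]] .
  moreover have "e \<in> set (pattern (x + a))"
    using e by (simp add: a_def)
  ultimately have cand: "(a, b, e) \<in> set (crossing_candidates x d)"
    using ab by (simp add: mem_crossing_candidates)
  then have "of_int (det2 (a, b) e) / of_int (det2 d e) = t"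
    using det crossing_table(2)[OF d cand] by simp
  then have point: "(code_edge (x', y', e), z) =
      (code_edge (x + a, y + b, e), code_curve (x, y, d) (of_int (det2 (a, b) e) / of_int (det2 d e)))"
    using same_edge zt by simp
  show ?thesis
    unfolding crossing_points.simps by (rule rev_image_eqI[OF cand]) (simp only: prod.case point)
qed

definition edge_curve :: "nat set \<Rightarrow> real \<Rightarrow> complex" where
  "edge_curve e = code_curve (inv_into codes code_edge e)"

lemma edge_curve_crossings:
  assumes "e \<in> code_edge ` codes" "f \<in> code_edge ` codes" "f \<noteq> e"
  shows "{f} \<times> (curve_interior (edge_curve e) \<inter> curve_interior (edge_curve f))
           \<subseteq> crossing_points (inv_into codes code_edge e)"
proof clarify
  fix z assume z: "z \<in> curve_interior (edge_curve e)" "z \<in> curve_interior (edge_curve f)"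
  obtain x y d where t: "inv_into codes code_edge e = (x, y, d)"
    by (metis prod_cases3)
  obtain x' y' d' where t': "inv_into codes code_edge f = (x', y', d')"
    by (metis prod_cases3)
  have "(x, y, d) \<in> codes" "(x', y', d') \<in> codes"
    using assms(1,2) t t' by (metis inv_into_into)+
  moreover have "code_edge (x, y, d) = e" "code_edge (x', y', d') = f"
    using assms(1,2) t t' by (metis f_inv_into_f)+
  moreover have "z \<in> curve_interior (code_curve (x, y, d))" "z \<in> curve_interior (code_curve (x', y', d'))"
    using z t t' by (simp_all only: edge_curve_def)
  ultimately have "(code_edge (x', y', d'), z) \<in> crossing_points (x, y, d)"
    using assms(3) by (intro code_curves_cross) simp_all
  then show "(f, z) \<in> crossing_points (inv_into codes code_edge e)"
    using t \<open>code_edge (x', y', d') = f\<close> by (simp only:)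
qed

lemma finite_crossing_points: "finite (crossing_points t)"
  by (cases t) (simp only: crossing_points.simps finite_imageI finite_set)

lemma finite_edge_curve_crossings:
  assumes "e \<in> code_edge ` codes" "f \<in> code_edge ` codes" "f \<noteq> e"
  shows "finite (curve_interior (edge_curve e) \<inter> curve_interior (edge_curve f))"
proof -
  have "finite ({f} \<times> (curve_interior (edge_curve e) \<inter> curve_interior (edge_curve f)))"
    using edge_curve_crossings[OF assms] finite_crossing_points by (rule finite_subset)
  then show ?thesis
    by (auto simp: finite_cartesian_product_iff)
qed

lemma crossings_on_edge_le_2:
  assumes "E \<subseteq> code_edge ` codes" "finite E" and "e \<in> E"
  shows "crossings_on_edge E edge_curve e \<le> 2"
proof -
  let ?I = "\<lambda>f. curve_interior (edge_curve e) \<inter> curve_interior (edge_curve f)"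
  let ?t = "inv_into codes code_edge e"
  have e: "e \<in> code_edge ` codes"
    using assms by blast
  have "\<forall>f \<in> E - {e}. finite (?I f)"
    using assms(1) finite_edge_curve_crossings[OF e] by blast
  then have "crossings_on_edge E edge_curve e = card (SIGMA f : E - {e}. ?I f)"
    unfolding crossings_on_edge_def using assms(2) by (simp add: card_SigmaI)
  also have "\<dots> \<le> card (crossing_points ?t)"
  proof (rule card_mono[OF finite_crossing_points])
    show "(SIGMA f : E - {e}. ?I f) \<subseteq> crossing_points ?t"
      using edge_curve_crossings[OF e] assms(1) by blast
  qed
  also have "\<dots> \<le> 2"
  proof -
    obtain x y d where "?t = (x, y, d)"
      by (metis prod_cases3)
    moreover have "?t \<in> codes"
      using e by (rule inv_into_into)
    ultimately show ?thesis
      using card_crossing_points_le by simp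
  qed
  finally show ?thesis .
qed

lemma k_planar_code_edges:
  assumes "E \<subseteq> code_edge ` codes" and "finite E"
  shows "k_planar 2 V E"
  unfolding k_planar_def
proof (intro exI conjI)
  show "drawing V E vertex_point edge_curve"
    unfolding drawing_def
  proof (intro conjI ballI impI)
    show "inj_on vertex_point V"
      using inj_vertex_point by (rule inj_on_subset) simp
  next
    fix e assume "e \<in> E"
    then have "e \<in> code_edge ` codes"
      using assms(1) by blast
    obtain x y d where t: "inv_into codes code_edge e = (x, y, d)"
      by (metis prod_cases3)
    with \<open>e \<in> code_edge ` codes\<close> have "(x, y, d) \<in> codes" and e: "e = code_edge (x, y, d)"
      by (metis inv_into_into, metis f_inv_into_f)
    have curve: "edge_curve e = code_curve (x, y, d)"
      using t by (simp only: edge_curve_def)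
    have d: "d \<in> set (pattern x)" and "0 \<le> x"
      using \<open>(x, y, d) \<in> codes\<close> by (simp_all add: codes_def)
    note dir = pattern_dir[OF d]
    show "arc (edge_curve e)"
      unfolding curve using dir by (intro arc_code_curve) auto
    have "0 \<le> x + fst d"
      using \<open>0 \<le> x\<close> dir by simp
    then have "vertex_point ` e =
        {cylinder_point (of_int x) (of_int y), cylinder_point (of_int (x + fst d)) (of_int (y + snd d))}"
      using \<open>0 \<le> x\<close> by (simp add: e code_edge.simps vertex_point_vtx)
    then show "{pathstart (edge_curve e), pathfinish (edge_curve e)} = vertex_point ` e"
      by (simp add: curve pathstart_def pathfinish_def)
    show "vertex_point ` V \<inter> curve_interior (edge_curve e) = {}"
      unfolding curve using vertex_point_notin_code_curve_interior dir(5) by blast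
  next
    fix e f assume "e \<in> E" "f \<in> E" "e \<noteq> f"
    then show "finite (curve_interior (edge_curve e) \<inter> curve_interior (edge_curve f))"
      using assms(1) by (intro finite_edge_curve_crossings) auto
  qed
  show "\<forall>e\<in>E. crossings_on_edge E edge_curve e \<le> 2"
    using crossings_on_edge_le_2[OF assms] by blast
qed

section \<open>No cycles of length 3 or 4\<close>

definition coords :: "nat \<Rightarrow> int \<times> int" where
  "coords v = (int (v div 5), int (v mod 5))"

lemma inj_coords: "inj coords"
proof (rule injI)
  fix u v assume "coords u = coords v"
  then have "u div 5 = v div 5" "u mod 5 = v mod 5"
    by (simp_all add: coords_def)
  then show "u = v"
    by (metis div_mult_mod_eq)
qed

lemma coords_vtx: "0 \<le> x \<Longrightarrow> coords (vtx x y) = (x, y mod 5)"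
  using vtx_div_mod[of x y] by (simp add: coords_def)

fun neighbours :: "int \<times> int \<Rightarrow> (int \<times> int) list" where
  "neighbours (x, y) =
     [(x + fst d, (y + snd d) mod 5). d \<leftarrow> pattern x] @
     [(x - fst d, (y - snd d) mod 5). d \<leftarrow> filter (\<lambda>d. d \<in> set (pattern (x - fst d))) dirs]"

lemma coords_adjacent:
  assumes "(x, y, d) \<in> codes" and "{u, v} = code_edge (x, y, d)"
  shows "coords v \<in> set (neighbours (coords u))"
proof -
  have d: "d \<in> set (pattern x)" and "0 \<le> x" "0 \<le> y" "y < 5"
    using assms(1) by (auto simp: codes_def)
  then have "0 \<le> x + fst d"
    using pattern_dir(2)[OF d] by simp
  then have c: "coords (vtx x y) = (x, y)"
    "coords (vtx (x + fst d) (y + snd d)) = (x + fst d, (y + snd d) mod 5)"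
    using \<open>0 \<le> x\<close> \<open>0 \<le> y\<close> \<open>y < 5\<close> by (simp_all add: coords_vtx)
  have "((y + snd d) mod 5 - snd d) mod 5 = y"
    using \<open>0 \<le> y\<close> \<open>y < 5\<close> by (simp add: mod_diff_left_eq)
  moreover have "d \<in> set (filter (\<lambda>d'. d' \<in> set (pattern (x + fst d - fst d'))) dirs)"
    using d set_pattern_subset_dirs by auto
  ultimately have backward: "(x, y) \<in> set (neighbours (x + fst d, (y + snd d) mod 5))"
    unfolding neighbours.simps set_append set_map by (intro UnI2 rev_image_eqI[of d]) simp_all
  have forward: "(x + fst d, (y + snd d) mod 5) \<in> set (neighbours (x, y))"
    using d unfolding neighbours.simps set_append set_map by blast
  from assms(2) consider "u = vtx x y" "v = vtx (x + fst d) (y + snd d)"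
    | "u = vtx (x + fst d) (y + snd d)" "v = vtx x y"
    by (auto simp: code_edge.simps doubleton_eq_iff)
  then show ?thesis
    by cases (simp_all only: c forward backward)
qed

definition translate :: "int \<Rightarrow> int \<Rightarrow> int \<times> int \<Rightarrow> int \<times> int" where
  "translate k y0 p = (fst p - 7 * k, (snd p - y0) mod 5)"

lemma neighbours_translate:
  assumes "q \<in> set (neighbours p)"
  shows "translate k y0 q \<in> set (neighbours (translate k y0 p))"
proof -
  obtain x y where p: "p = (x, y)"
    by (cases p)
  have pat: "pattern (x - 7 * k + a) = pattern (x + a)" for a
    using pattern_periodic[of "x + a" "- k"] by (simp add: algebra_simps)
  have tp: "translate k y0 p = (x - 7 * k, (y - y0) mod 5)"
    by (simp add: p translate_def)
  from assms consider
      d where "d \<in> set (pattern x)" "q = (x + fst d, (y + snd d) mod 5)"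
    | d where "d \<in> set dirs" "d \<in> set (pattern (x - fst d))" "q = (x - fst d, (y - snd d) mod 5)"
    unfolding p neighbours.simps set_append set_map set_filter by blast
  then show ?thesis
  proof cases
    case (1 d)
    have "translate k y0 q = (x - 7 * k + fst d, ((y - y0) mod 5 + snd d) mod 5)"
      using 1(2) by (simp add: translate_def mod_simps algebra_simps)
    moreover have "d \<in> set (pattern (x - 7 * k))"
      using 1(1) pat[of 0] by simp
    ultimately show ?thesis
      unfolding tp neighbours.simps set_append set_map by blast
  next
    case (2 d)
    have "translate k y0 q = (x - 7 * k - fst d, ((y - y0) mod 5 - snd d) mod 5)"
      using 2(3) by (simp add: translate_def mod_simps algebra_simps)
    moreover have "d \<in> set (pattern (x - 7 * k - fst d))"
      using 2(2) pat[of "- fst d"] by simp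
    ultimately show ?thesis
      using 2(1) unfolding tp neighbours.simps set_append set_map set_filter by blast
  qed
qed

lemma translate_coords_inj:
  assumes "translate k y0 (coords u) = translate k y0 (coords v)"
  shows "u = v"
proof -
  have shifted: "(int u mod 5 - y0) mod 5 = (int v mod 5 - y0) mod 5"
    using assms by (simp add: translate_def coords_def zmod_int)
  have "int u mod 5 = ((int u mod 5 - y0) mod 5 + y0) mod 5"
    by (simp add: mod_simps)
  also have "\<dots> = ((int v mod 5 - y0) mod 5 + y0) mod 5"
    by (simp only: shifted)
  also have "\<dots> = int v mod 5"
    by (simp add: mod_simps)
  finally have "u mod 5 = v mod 5"
    by (metis of_nat_eq_iff zmod_int of_nat_numeral)
  then have "coords u = coords v"
    using assms by (simp add: translate_def coords_def)
  with inj_coords show ?thesis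
    by (rule injD)
qed

lemma translate_coords_self:
  "translate (fst (coords u) div 7) (snd (coords u)) (coords u) = (fst (coords u) mod 7, 0)"
  by (simp add: translate_def minus_mult_div_eq_mod)

definition short_cycle_free_at :: "int \<times> int \<Rightarrow> bool" where
  "short_cycle_free_at p \<longleftrightarrow>
     (\<forall>v1 \<in> set (neighbours p). \<forall>v2 \<in> set (neighbours v1). v2 \<noteq> p \<longrightarrow>
        p \<notin> set (neighbours v2) \<and>
        (\<forall>v3 \<in> set (neighbours v2). v3 \<noteq> v1 \<and> v3 \<noteq> p \<longrightarrow> p \<notin> set (neighbours v3)))"

lemma short_cycle_free_at_column_start:
  assumes "0 \<le> c" "c < 7"
  shows "short_cycle_free_at (c, 0)"
proof -
  have "\<forall>c \<in> set [0..6]. short_cycle_free_at (c, 0)"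
    unfolding short_cycle_free_at_def by code_simp
  with assms show ?thesis
    by simp
qed

lemma cycle_in_neighbour_graph:
  assumes "E \<subseteq> code_edge ` codes"
    and "length xs = k" "distinct xs" "\<forall>i<k. {xs ! i, xs ! ((i + 1) mod k)} \<in> E"
  obtains c P where "0 \<le> c" "c < 7" "P (xs ! 0) = (c, 0)"
    and "\<And>i. i < k \<Longrightarrow> P (xs ! ((i + 1) mod k)) \<in> set (neighbours (P (xs ! i)))"
    and "\<And>i j. i < k \<Longrightarrow> j < k \<Longrightarrow> i \<noteq> j \<Longrightarrow> P (xs ! i) \<noteq> P (xs ! j)"
proof -
  let ?u = "coords (xs ! 0)"
  define P where "P v = translate (fst ?u div 7) (snd ?u) (coords v)" for v
  have "P (xs ! 0) = (fst ?u mod 7, 0)"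
    unfolding P_def by (rule translate_coords_self)
  moreover have "P (xs ! ((i + 1) mod k)) \<in> set (neighbours (P (xs ! i)))" if "i < k" for i
  proof -
    have "{xs ! i, xs ! ((i + 1) mod k)} \<in> code_edge ` codes"
      using assms(1,4) that by blast
    then obtain t where "t \<in> codes" "{xs ! i, xs ! ((i + 1) mod k)} = code_edge t"
      by (rule imageE) blast
    moreover obtain x y d where "t = (x, y, d)"
      by (cases t)
    ultimately show ?thesis
      unfolding P_def by (intro neighbours_translate coords_adjacent) simp_all
  qed
  moreover have "P (xs ! i) \<noteq> P (xs ! j)" if "i < k" "j < k" "i \<noteq> j" for i j
  proof
    assume "P (xs ! i) = P (xs ! j)"
    then have "xs ! i = xs ! j"
      unfolding P_def by (rule translate_coords_inj)
    with that assms(2,3) show False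
      by (simp add: nth_eq_iff_index_eq)
  qed
  ultimately show thesis
    by (intro that[of "fst ?u mod 7" P]) simp_all
qed

lemma no_short_cycles:
  assumes "E \<subseteq> code_edge ` codes" and "k = 3 \<or> k = 4"
  shows "\<not> has_cycle_of_length V E k"
proof
  assume "has_cycle_of_length V E k"
  then obtain xs where "length xs = k" "distinct xs" "\<forall>i<k. {xs ! i, xs ! ((i + 1) mod k)} \<in> E"
    unfolding has_cycle_of_length_def by blast
  with assms(1) obtain c P where c: "0 \<le> c" "c < 7" and P0: "P (xs ! 0) = (c, 0)"
    and step: "\<And>i. i < k \<Longrightarrow> P (xs ! ((i + 1) mod k)) \<in> set (neighbours (P (xs ! i)))"
    and distinct: "\<And>i j. i < k \<Longrightarrow> j < k \<Longrightarrow> i \<noteq> j \<Longrightarrow> P (xs ! i) \<noteq> P (xs ! j)"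
    by (rule cycle_in_neighbour_graph) blast
  define p where "p = (c, 0 :: int)"
  have "short_cycle_free_at p"
    unfolding p_def using c by (rule short_cycle_free_at_column_start)
  then have free: "\<And>v1 v2. v1 \<in> set (neighbours p) \<Longrightarrow> v2 \<in> set (neighbours v1) \<Longrightarrow> v2 \<noteq> p \<Longrightarrow>
      p \<notin> set (neighbours v2) \<and>
      (\<forall>v3 \<in> set (neighbours v2). v3 \<noteq> v1 \<and> v3 \<noteq> p \<longrightarrow> p \<notin> set (neighbours v3))"
    unfolding short_cycle_free_at_def by blast
  have "P (xs ! 1) \<in> set (neighbours p)" and "P (xs ! 2) \<in> set (neighbours (P (xs ! 1)))"
    and "P (xs ! 2) \<noteq> p"
    using step[of 0] step[of 1] distinct[of 2 0] P0 assms(2) by (auto simp: p_def numeral_2_eq_2)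
  then have no_return: "p \<notin> set (neighbours (P (xs ! 2))) \<and>
      (\<forall>v3 \<in> set (neighbours (P (xs ! 2))). v3 \<noteq> P (xs ! 1) \<and> v3 \<noteq> p \<longrightarrow> p \<notin> set (neighbours v3))"
    by (rule free)
  from assms(2) show False
  proof
    assume "k = 3"
    then have "p \<in> set (neighbours (P (xs ! 2)))"
      using step[of 2] P0 by (simp add: p_def)
    with no_return show False
      by blast
  next
    assume "k = 4"
    then have "P (xs ! 3) \<in> set (neighbours (P (xs ! 2)))" and "p \<in> set (neighbours (P (xs ! 3)))"
      and "P (xs ! 3) \<noteq> P (xs ! 1)" and "P (xs ! 3) \<noteq> p"
      using step[of 2] step[of 3] distinct[of 3 1] distinct[of 3 0] P0 by (simp_all add: p_def)
    with no_return show False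
      by blast
  qed
qed

lemma girth_eqI:
  assumes "has_cycle_of_length V E k" and "\<And>j. j < k \<Longrightarrow> \<not> has_cycle_of_length V E j"
  shows "girth V E = enat k"
proof -
  have "(LEAST j. has_cycle_of_length V E j) = k"
    using assms by (intro Least_equality) (auto simp flip: not_less)
  with assms(1) show ?thesis
    by (auto simp: girth_def)
qed

section \<open>The finite graphs\<close>

lemma vtx_less:
  assumes "0 \<le> x" "x < L"
  shows "vtx x y < nat (5 * L)"
proof -
  have "int (vtx x y) = 5 * x + y mod 5"
    using assms by (simp add: vtx_def)
  also have "\<dots> < 5 * L"
    using assms(2) by (smt (verit) pos_mod_bound)
  finally show ?thesis
    by linarith
qed

lemma code_edge_card_2:
  assumes "t \<in> codes"
  shows "card (code_edge t) = 2"
proof -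
  obtain x y d where t: "t = (x, y, d)"
    by (cases t)
  have d: "d \<in> set (pattern x)" and "0 \<le> x"
    using assms by (auto simp: t codes_def)
  have "vtx x y \<noteq> vtx (x + fst d) (y + snd d)"
  proof
    assume "vtx x y = vtx (x + fst d) (y + snd d)"
    then have "coords (vtx x y) = coords (vtx (x + fst d) (y + snd d))"
      by simp
    then have "fst d = 0" and "y mod 5 = (y + snd d) mod 5"
      using \<open>0 \<le> x\<close> pattern_dir(2)[OF d] by (simp_all add: coords_vtx)
    with pattern_dir(6)[OF d] show False
      by presburger
  qed
  then show ?thesis
    by (simp add: t code_edge.simps)
qed

lemma coords_code_edge:
  assumes "(x, y, d) \<in> codes"
  shows "coords ` code_edge (x, y, d) = {(x, y), (x + fst d, (y + snd d) mod 5)}"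
proof -
  have "0 \<le> x" "0 \<le> y" "y < 5" and d: "d \<in> set (pattern x)"
    using assms by (auto simp: codes_def)
  moreover have "0 \<le> x + fst d"
    using \<open>0 \<le> x\<close> pattern_dir(2)[OF d] by simp
  ultimately show ?thesis
    by (simp add: code_edge.simps coords_vtx)
qed

lemma inj_on_code_edge: "inj_on code_edge codes"
proof (rule inj_onI)
  fix t t' assume "t \<in> codes" "t' \<in> codes" and eq: "code_edge t = code_edge t'"
  obtain x y d x' y' d' where t: "t = (x, y, d)" and t': "t' = (x', y', d')"
    by (metis prod_cases3)
  have codes: "(x, y, d) \<in> codes" "(x', y', d') \<in> codes"
    using \<open>t \<in> codes\<close> \<open>t' \<in> codes\<close> t t' by simp_all
  have y: "0 \<le> y" "y < 5" "0 \<le> y'" "y' < 5"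
    and d: "d \<in> set (pattern x)" "d' \<in> set (pattern x')"
    using codes by (auto simp: codes_def)
  note dir = pattern_dir[OF d(1)] pattern_dir[OF d(2)]
  have "{(x, y), (x + fst d, (y + snd d) mod 5)} = {(x', y'), (x' + fst d', (y' + snd d') mod 5)}"
    using eq coords_code_edge[OF codes(1)] coords_code_edge[OF codes(2)] t t' by simp
  then consider
      "(x, y) = (x', y')" "(x + fst d, (y + snd d) mod 5) = (x' + fst d', (y' + snd d') mod 5)"
    | "(x, y) = (x' + fst d', (y' + snd d') mod 5)" "(x + fst d, (y + snd d) mod 5) = (x', y')"
    by (auto simp: doubleton_eq_iff)
  then show "t = t'"
  proof cases
    case 1
    then have "fst d = fst d'" and "(y + snd d) mod 5 = (y + snd d') mod 5"
      by simp_all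
    moreover have "snd d = snd d'"
      using calculation(2) dir(4) dir(10) by presburger
    ultimately show ?thesis
      using 1 t t' by (simp add: prod_eq_iff)
  next
    case 2
    then have "fst d = 0" "fst d' = 0"
      using dir(2) dir(8) by auto
    then have "snd d = 1" "snd d' = 1"
      using dir(6) dir(12) by simp_all
    with 2 have "y = (y' + 1) mod 5" "y' = (y + 1) mod 5"
      by simp_all
    with y show ?thesis
      by presburger
  qed
qed

definition codes_upto :: "int \<Rightarrow> (int \<times> int \<times> (int \<times> int)) set" where
  "codes_upto L = {(x, y, d). (x, y, d) \<in> codes \<and> x + fst d < L}"

definition lattice_graph :: "int \<Rightarrow> nat set set" where
  "lattice_graph L = code_edge ` codes_upto L"

lemma codes_upto_subset: "codes_upto L \<subseteq> codes"
  by (auto simp: codes_upto_def)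

lemma lattice_graph_subset: "lattice_graph L \<subseteq> code_edge ` codes"
  unfolding lattice_graph_def using codes_upto_subset by (rule image_mono)

lemma code_edge_subset_lessThan:
  assumes "t \<in> codes_upto L"
  shows "code_edge t \<subseteq> {..<nat (5 * L)}"
proof -
  obtain x y d where t: "t = (x, y, d)"
    by (cases t)
  have "0 \<le> x" "x + fst d < L" and d: "d \<in> set (pattern x)"
    using assms by (auto simp: t codes_upto_def codes_def)
  moreover note pattern_dir(2)[OF d]
  ultimately show ?thesis
    using vtx_less[of x L] vtx_less[of "x + fst d" L] by (auto simp: t code_edge.simps)
qed

lemma simple_graph_lattice_graph:
  assumes "5 * L \<le> int n"
  shows "simple_graph {..<n} (lattice_graph L)"
  unfolding simple_graph_def lattice_graph_def
proof (intro conjI ballI finite_lessThan)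
  fix e assume "e \<in> code_edge ` codes_upto L"
  then obtain t where t: "t \<in> codes_upto L" and e: "e = code_edge t"
    by blast
  have "{..<nat (5 * L)} \<subseteq> {..<n}"
    using assms by auto
  with code_edge_subset_lessThan[OF t] show "e \<subseteq> {..<n}"
    unfolding e by (rule order_trans)
  show "card e = 2"
    using t codes_upto_subset unfolding e by (intro code_edge_card_2) blast
qed

lemma finite_lattice_graph: "finite (lattice_graph L)"
proof (rule finite_subset)
  show "lattice_graph L \<subseteq> Pow {..<nat (5 * L)}"
    unfolding lattice_graph_def using code_edge_subset_lessThan by blast
qed simp

lemma girth_lattice_graph:
  assumes "3 \<le> L" and "5 * L \<le> int n"
  shows "girth {..<n} (lattice_graph L) = 5"
proof -
  have edge: "code_edge (x, y, d) \<in> lattice_graph L"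
    if "0 \<le> x" "x + fst d < L" "0 \<le> y" "y < 5" "d \<in> set (pattern x)" for x y d
    using that unfolding lattice_graph_def by (intro imageI) (simp add: codes_upto_def codes_def)
  have "{0, 1} \<in> lattice_graph L" "{1, 5} \<in> lattice_graph L" "{5, 14} \<in> lattice_graph L"
    "{14, 9} \<in> lattice_graph L" "{9, 0} \<in> lattice_graph L"
    using edge[of 0 "(0, 1)" 0] edge[of 0 "(1, -1)" 1] edge[of 1 "(1, -1)" 0]
      edge[of 1 "(1, 0)" 4] edge[of 0 "(1, -1)" 0] assms(1)
    by (simp_all add: code_edge.simps vtx_def pattern_def column_patterns_def insert_commute)
  then have cycle: "{[0, 1, 5, 14, 9] ! i, [0, 1, 5, 14, 9] ! ((i + 1) mod 5)} \<in> lattice_graph L"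
    if "i < 5" for i :: nat
  proof -
    from that have "i = 0 \<or> i = 1 \<or> i = 2 \<or> i = 3 \<or> i = 4"
      by presburger
    then show ?thesis
      using \<open>{0, 1} \<in> lattice_graph L\<close> \<open>{1, 5} \<in> lattice_graph L\<close> \<open>{5, 14} \<in> lattice_graph L\<close>
        \<open>{14, 9} \<in> lattice_graph L\<close> \<open>{9, 0} \<in> lattice_graph L\<close>
      by (elim disjE) simp_all
  qed
  have "set [0, 1, 5, 14, 9] \<subseteq> {..<n}"
    using assms by auto
  with cycle have "has_cycle_of_length {..<n} (lattice_graph L) 5"
    unfolding has_cycle_of_length_def by (intro conjI exI[of _ "[0, 1, 5, 14, 9]"]) auto
  moreover have "\<not> has_cycle_of_length {..<n} (lattice_graph L) j" if "j < 5" for j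
  proof (cases "j = 3 \<or> j = 4")
    case True
    then show ?thesis
      using no_short_cycles[OF lattice_graph_subset] by blast
  next
    case False
    with that show ?thesis
      by (simp add: has_cycle_of_length_def)
  qed
  ultimately show ?thesis
    using girth_eqI by (metis numeral_eq_enat)
qed

definition period_codes :: "(int \<times> int \<times> (int \<times> int)) set" where
  "period_codes = (SIGMA c : {0..<7}. {0..<5} \<times> set (pattern c))"

lemma card_period_codes: "card period_codes = 80"
  unfolding period_codes_def by code_simp

lemma finite_codes_upto: "finite (codes_upto L)"
proof (rule finite_subset)
  show "codes_upto L \<subseteq> {0..<L} \<times> {0..<5} \<times> set dirs"
    using set_pattern_subset_dirs pattern_dir(2)
    by (fastforce simp: codes_upto_def codes_def)
qed simp

lemma card_codes_upto: "80 * (q - 1) \<le> card (codes_upto (7 * int q))"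
proof -
  define f :: "int \<times> int \<times> int \<times> (int \<times> int) \<Rightarrow> int \<times> int \<times> (int \<times> int)"
    where "f = (\<lambda>(k, c, y, d). (7 * k + c, y, d))"
  let ?B = "{0..<int q - 1} \<times> period_codes"
  have inj: "inj_on f ?B"
    by (rule inj_onI) (auto simp: f_def period_codes_def; presburger)
  have sub: "f ` ?B \<subseteq> codes_upto (7 * int q)"
  proof
    fix t assume "t \<in> f ` ?B"
    then obtain k c y d where t: "t = f (k, c, y, d)"
      and "k \<in> {0..<int q - 1}" "(c, y, d) \<in> period_codes"
      by auto
    then have "0 \<le> k" "k < int q - 1" "0 \<le> c" "c < 7" "0 \<le> y" "y < 5" and d: "d \<in> set (pattern c)"
      by (auto simp: period_codes_def)
    moreover have "pattern (7 * k + c) = pattern c"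
      using pattern_periodic[of c k] by (simp add: add.commute)
    moreover have "fst d \<le> 2"
      using pattern_dir(3)[OF d] .
    ultimately show "t \<in> codes_upto (7 * int q)"
      by (simp add: t f_def codes_upto_def codes_def)
  qed
  have "80 * (q - 1) = card (f ` ?B)"
    using inj by (simp add: card_image card_cartesian_product card_period_codes)
  also have "\<dots> \<le> card (codes_upto (7 * int q))"
    using finite_codes_upto sub by (rule card_mono)
  finally show ?thesis .
qed

lemma card_lattice_graph: "80 * (q - 1) \<le> card (lattice_graph (7 * int q))"
proof -
  have "card (lattice_graph (7 * int q)) = card (codes_upto (7 * int q))"
    unfolding lattice_graph_def using inj_on_code_edge codes_upto_subset
    by (intro card_image) (rule inj_on_subset)
  with card_codes_upto show ?thesis
    by simp
qed

theorem theorem17: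
  shows "\<exists>C::real. \<exists>N::nat. \<forall>n\<ge>N. \<exists>(V::nat set) E.
           simple_graph V E \<and> card V = n \<and> k_planar 2 V E \<and> girth V E = 5 \<and>
           real (card E) \<ge> (2 + 2/7) * real n - C"
proof (intro exI[of _ "160 :: real"] exI[of _ "35 :: nat"] allI impI)
  fix n :: nat assume "35 \<le> n"
  define q where "q = n div 35"
  define E where "E = lattice_graph (7 * int q)"
  have "1 \<le> q" "35 * q \<le> n" "n < 35 * q + 35"
    using \<open>35 \<le> n\<close> unfolding q_def by linarith+
  then have size: "5 * (7 * int q) \<le> int n" and "3 \<le> 7 * int q"
    by simp_all
  have "(2 + 2/7) * real n - 160 \<le> 80 * (real q - 1)"
    using \<open>n < 35 * q + 35\<close> by (simp add: field_simps)
  also have "\<dots> \<le> real (card E)"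
    using card_lattice_graph[of q] \<open>1 \<le> q\<close> unfolding E_def by (simp add: of_nat_diff)
  finally have "(2 + 2/7) * real n - 160 \<le> real (card E)" .
  with simple_graph_lattice_graph[OF size] girth_lattice_graph[OF \<open>3 \<le> 7 * int q\<close> size]
    k_planar_code_edges[OF lattice_graph_subset finite_lattice_graph]
  show "\<exists>(V::nat set) E. simple_graph V E \<and> card V = n \<and> k_planar 2 V E \<and> girth V E = 5 \<and>
      real (card E) \<ge> (2 + 2/7) * real n - 160"
    unfolding E_def by (intro exI[of _ "{..<n}"] exI[of _ "lattice_graph (7 * int q)"]) simp
qed

end
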